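(* For all $n\ge1$, in $\mathcal Z^{\mathfrak f}$: $\zeta^{\mathfrak f}((x_0x_1)^nx_0)=-2\sum_{i=0}^{n-1}\zeta^{\mathfrak f}(\{2\}^i,3,\{2\}^{n-1-i})=2\sum_{i=1}^n(-1)^i\zeta^{\mathfrak f}(2i+1)\,\zeta^{\mathfrak f}(\{2\}^{n-i})$.
   Context: Formal MZVs: $\mathcal X=\{x_0,x_1\}$, $\mathbb Q\langle\mathcal X\rangle$ free noncommutative polynomials, $ш$ shuffle product ($\mathbf1шw=wш\mathbf1=w$, $auшbv=a(uшbv)+b(auшv)$). $\mathcal Z^{\mathfrak f}=(\mathbb Q\langle\mathcal X\rangle,ш)/R$, $R$ the ideal generated by $x_0,x_1$ and $uш v-\iota(\iota^{-1}(u)*\iota^{-1}(v))$ for $u\in\mathbb Q\mathbf1+x_0\mathbb Q\langle\mathcal X\rangle x_1$, $v\in\mathbb Q\mathbf1+\mathbb Q\langle\mathcal X\rangle x_1$, with $\iota(y_{k_1}\cdots y_{k_d})=x_0^{k_1-1}x_1\cdots x_0^{k_d-1}x_1$ and $*$ the stuffle product on $\mathbb Q\langle y_1,y_2,\dots\rangle$ ($y_iu*y_jv=y_i(u*y_jv)+y_j(y_iu*v)+y_{i+j}(u*v)$). $\zeta^{\mathfrak f}(w)$ is the class of the word $w$, $\zeta^{\mathfrak f}(k_1,\dots,k_d)=\zeta^{\mathfrak f}(x_0^{k_1-1}x_1\cdots x_0^{k_d-1}x_1)$, $\{2\}^m$ denotes $m$ entries equal to $2$, $\zeta^{\mathfrak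 f}(\{2\}^0)=1$. *)

theory Defs
  imports Complex_Main "HOL-Library.Function_Algebras"
begin

datatype letter = X0 | X1

text \<open>Elements of Q<X> are finitely supported functions from words to rationals;
  addition/subtraction/sums are pointwise.\<close>
type_synonym poly = "letter list \<Rightarrow> rat"

definition fin_supp :: "poly \<Rightarrow> bool" where
  "fin_supp p \<longleftrightarrow> finite {w. p w \<noteq> 0}"

definition wp :: "letter list \<Rightarrow> poly" where
  "wp w = (\<lambda>v. if v = w then 1 else 0)"

definition smul :: "rat \<Rightarrow> poly \<Rightarrow> poly" where
  "smul c p = (\<lambda>w. c * p w)"

text \<open>shc u v w = coefficient of the word w in the shuffle u sh v of words,
  following 1 sh w = w sh 1 = w and au sh bv = a(u sh bv) + b(au sh v).\<close>
fun shc :: "letter list \<Rightarrow> letter list \<Rightarrow> letter list \<Rightarrow> nat" where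
  "shc [] v w = (if v = w then 1 else 0)"
| "shc (a#u) [] w = (if a#u = w then 1 else 0)"
| "shc (a#u) (b#v) [] = 0"
| "shc (a#u) (b#v) (c#w) =
     (if c = a then shc u (b#v) w else 0) + (if c = b then shc (a#u) v w else 0)"

definition sh :: "poly \<Rightarrow> poly \<Rightarrow> poly" where
  "sh p q = (\<lambda>w. \<Sum>(u,v)\<in>{(u,v). length u + length v = length w}.
                  p u * q v * of_nat (shc u v w))"

text \<open>Stuffle on words in y_1,y_2,...; a word y_{k1}...y_{kd} is the list [k1,...,kd].
  stc a b c = coefficient of c in a * b, following
  y_i u * y_j v = y_i(u * y_j v) + y_j(y_i u * v) + y_{i+j}(u * v).\<close>
fun stc :: "nat list \<Rightarrow> nat list \<Rightarrow> nat list \<Rightarrow> nat" where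
  "stc [] v w = (if v = w then 1 else 0)"
| "stc (i#u) [] w = (if i#u = w then 1 else 0)"
| "stc (i#u) (j#v) [] = 0"
| "stc (i#u) (j#v) (k#w) =
     (if k = i then stc u (j#v) w else 0) + (if k = j then stc (i#u) v w else 0)
     + (if k = i + j then stc u v w else 0)"

definition pos_word :: "nat list \<Rightarrow> bool" where
  "pos_word ks \<longleftrightarrow> (\<forall>k\<in>set ks. k \<ge> 1)"

definition iota :: "nat list \<Rightarrow> letter list" where
  "iota ks = concat (map (\<lambda>k. replicate (k - 1) X0 @ [X1]) ks)"

definition iota_stuffle :: "nat list \<Rightarrow> nat list \<Rightarrow> poly" where
  "iota_stuffle a b = (\<lambda>w. \<Sum>c\<in>{c. pos_word c \<and> iota c = w}. of_nat (stc a b c))"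

text \<open>The linear generators u sh v - iota(iota^-1 u * iota^-1 v)
  with u in Q1 + x0 Q<X> x1, v in Q1 + Q<X> x1 are spanned by those with u,v words,
  i.e. u = iota a (a empty or first entry >= 2) and v = iota b.\<close>
inductive_set R :: "poly set" where
  gen_x0: "wp [X0] \<in> R"
| gen_x1: "wp [X1] \<in> R"
| gen_st: "\<lbrakk>pos_word a; pos_word b; a = [] \<or> hd a \<ge> 2\<rbrakk> \<Longrightarrow>
           sh (wp (iota a)) (wp (iota b)) - iota_stuffle a b \<in> R"
| zero: "0 \<in> R"
| add: "\<lbrakk>p \<in> R; q \<in> R\<rbrakk> \<Longrightarrow> p + q \<in> R"
| scal: "p \<in> R \<Longrightarrow> smul c p \<in> R"
| mult: "\<lbrakk>p \<in> R; fin_supp q\<rbrakk> \<Longrightarrow> sh q p \<in> R"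

text \<open>Equality in Z^f = (Q<X>, sh)/R.\<close>
definition zeq :: "poly \<Rightarrow> poly \<Rightarrow> bool" where
  "zeq p q \<longleftrightarrow> p - q \<in> R"

text \<open>zeta^f(k1,...,kd) as (a representative of) the class of iota [k1,...,kd].\<close>
definition zf :: "nat list \<Rightarrow> poly" where
  "zf ks = wp (iota ks)"

end

theory Submission
  imports Defs
begin

text \<open>Shuffling \<open>(x\<^sub>0x\<^sub>1)\<^sup>n\<close> with the letter \<open>x\<^sub>0\<close>, which vanishes in
  \<open>Z\<^sup>f\<close>, inserts \<open>x\<^sub>0\<close> at each of the \<open>2n+1\<close> positions. Inserting it just before or
  just after the \<open>i\<close>-th \<open>x\<^sub>0\<close> gives the same word \<open>(x\<^sub>0x\<^sub>1)\<^sup>i x\<^sub>0x\<^sub>0x\<^sub>1 (x\<^sub>0x\<^sub>1)\<^sup>n\<^sup>-\<^sup>1\<^sup>-\<^sup>i\<close>,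
  i.e. \<open>\<zeta>({2}\<^sup>i,3,{2}\<^sup>n\<^sup>-\<^sup>1\<^sup>-\<^sup>i)\<close>, and inserting it at the end gives \<open>(x\<^sub>0x\<^sub>1)\<^sup>nx\<^sub>0\<close>;
  this is the first identity. For the second, write \<open>S(k,m)\<close> for the sum of \<open>\<zeta>\<close> over
  the \<open>m+1\<close> ways of inserting \<open>k\<close> into \<open>{2}\<^sup>m\<close>. The stuffle relation gives
  \<open>\<zeta>(2i+1)\<zeta>({2}\<^sup>m) = S(2i+1,m) + S(2i+3,m-1)\<close>, so the alternating sum over \<open>i\<close>
  telescopes to \<open>-S(3,n-1)\<close>, which is \<open>-\<Sum>\<^sub>i \<zeta>({2}\<^sup>i,3,{2}\<^sup>n\<^sup>-\<^sup>1\<^sup>-\<^sup>i)\<close>.\<close>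

lemma sum_fun_apply: "(\<Sum>i\<in>A. f i) x = (\<Sum>i\<in>A. f i x :: 'a::comm_monoid_add)"
  by (induction A rule: infinite_finite_induct) (auto simp: zero_fun_def plus_fun_def)

lemma smul_neg_one_power: "smul ((-1) ^ i) p = (-1) ^ i * p"
  by (induction i) (auto simp: smul_def fun_eq_iff)

lemma sum_alternating_telescope:
  "(\<Sum>i=1..N. (-1) ^ i * (F i + F (Suc i))) = (-1) ^ N * F (Suc N) - (F 1 :: 'a::ring_1)"
  by (induction N) (auto simp: algebra_simps)

lemma sum_lessThan_double: "(\<Sum>j<2 * (n::nat). g j) = (\<Sum>i<n. g (2 * i) + g (2 * i + 1) :: 'a::comm_monoid_add)"
  by (induction n) (auto simp: sum.distrib add_ac)

lemma fin_supp_wp: "fin_supp (wp w)"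
proof -
  have "{v. wp w v \<noteq> 0} = {w}" by (auto simp: wp_def)
  then show ?thesis by (simp add: fin_supp_def)
qed

lemma zeq_refl: "zeq p p"
  by (simp add: zeq_def R.zero)

lemma zeq_sym: "zeq p q \<Longrightarrow> zeq q p"
  unfolding zeq_def by (drule R.scal[where c = "-1"]) (simp add: smul_def fun_diff_def)

lemma zeq_add: "zeq p q \<Longrightarrow> zeq p' q' \<Longrightarrow> zeq (p + p') (q + q')"
  unfolding zeq_def by (drule (1) R.add) (simp add: algebra_simps)

lemma zeq_smul: "zeq p q \<Longrightarrow> zeq (smul c p) (smul c q)"
  unfolding zeq_def by (drule R.scal[where c = c]) (simp add: smul_def fun_diff_def algebra_simps)

lemma zeq_sum: "(\<And>i. i \<in> I \<Longrightarrow> zeq (f i) (g i)) \<Longrightarrow> zeq (\<Sum>i\<in>I. f i) (\<Sum>i\<in>I. g i)"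
  by (induction I rule: infinite_finite_induct) (auto simp: zeq_refl zeq_add)

lemma finite_word_pairs_length: "finite {(u :: letter list, v :: letter list). length u + length v = n}"
proof -
  have "(UNIV :: letter set) = {X0, X1}" using letter.exhaust by auto
  then have "finite (UNIV :: letter set)" by (metis finite.emptyI finite_insert)
  then have words: "finite {xs :: letter list. set xs \<subseteq> UNIV \<and> length xs \<le> n}"
    by (rule finite_lists_length_le)
  show ?thesis
    by (rule finite_subset[OF _ finite_cartesian_product[OF words words]]) auto
qed

lemma shc_length: "shc u v w \<noteq> 0 \<Longrightarrow> length u + length v = length w"
  by (induction u v w rule: shc.induct) (auto split: if_splits)

lemma sh_wp_wp: "sh (wp u) (wp v) = (\<lambda>w. of_nat (shc u v w))"
proof
  fix w
  have "sh (wp u) (wp v) w = (\<Sum>p\<in>{(u, v). length u + length v = length w}.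
           if p = (u, v) then of_nat (shc u v w) else 0)"
    unfolding sh_def by (intro sum.cong) (auto simp: wp_def split: if_splits)
  also have "\<dots> = of_nat (shc u v w)"
    using finite_word_pairs_length shc_length[of u v w] by auto
  finally show "sh (wp u) (wp v) w = of_nat (shc u v w)" .
qed

lemma shc_Nil2 [simp]: "shc u [] w = (if u = w then 1 else 0)"
  by (cases u) auto

lemma shc_singleton:
  "shc u [a] w = (\<Sum>j\<le>length u. if w = take j u @ a # drop j u then 1 else 0)"
proof (induction u arbitrary: w)
  case (Cons x u)
  show ?case
  proof (cases w)
    case (Cons c w')
    have "(\<Sum>j\<le>length (x # u). if w = take j (x # u) @ a # drop j (x # u) then 1 else 0)
        = (if c = a \<and> w' = x # u then 1 else 0)
          + (\<Sum>j\<le>length u. if c = x \<and> w' = take j u @ a # drop j u then 1 else (0::nat))"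
      unfolding Cons by (simp only: length_Cons sum.atMost_Suc_shift) simp
    also have "\<dots> = shc (x # u) [a] w"
      unfolding Cons by (cases "c = x") (auto simp: Cons.IH)
    finally show ?thesis ..
  qed simp
qed simp

lemma sh_wp_singleton: "sh (wp u) (wp [a]) = (\<Sum>j\<le>length u. wp (take j u @ a # drop j u))"
  unfolding sh_wp_wp
  by (rule ext) (auto simp: shc_singleton sum_fun_apply wp_def intro!: sum.cong)

lemma zeq_insertions_X0_zero: "zeq (\<Sum>j\<le>length u. wp (take j u @ X0 # drop j u)) 0"
  using R.mult[OF R.gen_x0 fin_supp_wp[of u]] by (simp add: zeq_def sh_wp_singleton)

lemma stc_Nil2 [simp]: "stc u [] w = (if u = w then 1 else 0)"
  by (cases u) auto

lemma stc_singleton: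
  "stc [k] v c = (\<Sum>j\<le>length v. if c = take j v @ k # drop j v then 1 else 0)
     + (\<Sum>j<length v. if c = take j v @ (k + v ! j) # drop (Suc j) v then 1 else 0)"
proof (induction v arbitrary: c)
  case (Cons x v)
  show ?case
  proof (cases c)
    case (Cons y c')
    have ins: "(\<Sum>j\<le>length (x # v). if c = take j (x # v) @ k # drop j (x # v) then 1 else 0)
        = (if y = k \<and> c' = x # v then 1 else 0)
          + (\<Sum>j\<le>length v. if y = x \<and> c' = take j v @ k # drop j v then 1 else (0::nat))"
      unfolding Cons by (simp only: length_Cons sum.atMost_Suc_shift) simp
    have merge: "(\<Sum>j<length (x # v).
          if c = take j (x # v) @ (k + (x # v) ! j) # drop (Suc j) (x # v) then 1 else 0)
        = (if y = k + x \<and> c' = v then 1 else 0)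
          + (\<Sum>j<length v. if y = x \<and> c' = take j v @ (k + v ! j) # drop (Suc j) v then 1 else (0::nat))"
      unfolding Cons by (simp only: length_Cons sum.lessThan_Suc_shift) simp
    show ?thesis
      unfolding ins merge unfolding Cons by (cases "y = x") (auto simp: Cons.IH)
  qed simp
qed simp

lemma iota_Nil [simp]: "iota [] = []"
  by (simp add: iota_def)

lemma iota_Cons [simp]: "iota (k # c) = replicate (k - 1) X0 @ X1 # iota c"
  by (simp add: iota_def)

lemma iota_append [simp]: "iota (a @ b) = iota a @ iota b"
  by (simp add: iota_def)

lemma replicate_X0_X1_eq_iff:
  "replicate a X0 @ X1 # s = replicate b X0 @ X1 # t \<longleftrightarrow> a = b \<and> s = t"
proof (induction a arbitrary: b)
  case 0 then show ?case by (cases b) auto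
next
  case (Suc a) then show ?case by (cases b) auto
qed

lemma inj_on_iota: "inj_on iota {c. pos_word c}"
proof
  fix c d assume "c \<in> {c. pos_word c}" "d \<in> {c. pos_word c}" "iota c = iota d"
  then show "c = d"
  proof (induction c arbitrary: d)
    case Nil then show ?case by (cases d) auto
  next
    case (Cons k c)
    then obtain k' d' where d: "d = k' # d'" by (cases d) auto
    with Cons.prems show ?case
      by (auto simp: pos_word_def replicate_X0_X1_eq_iff intro!: Cons.IH)
  qed
qed

lemma sum_iota_preimage_delta:
  assumes "pos_word d"
  shows "(\<Sum>c\<in>{c. pos_word c \<and> iota c = w}. if c = d then 1 else 0) = wp (iota d) w"
proof -
  have "{c. pos_word c \<and> iota c = w} = iota -` {w} \<inter> {c. pos_word c}"
    by auto
  then have "finite {c. pos_word c \<and> iota c = w}"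
    using finite_vimage_IntI[OF _ inj_on_iota] by simp
  with assms show ?thesis by (simp add: wp_def eq_commute)
qed

lemma iota_stuffle_singleton:
  assumes "pos_word v" "k \<ge> 1"
  shows "iota_stuffle [k] v = (\<Sum>j\<le>length v. wp (iota (take j v @ k # drop j v)))
     + (\<Sum>j<length v. wp (iota (take j v @ (k + v ! j) # drop (Suc j) v)))"
proof
  fix w
  let ?C = "{c. pos_word c \<and> iota c = w}"
  have pos: "pos_word (take j v @ k # drop j v)" "pos_word (take j v @ (k + v ! j) # drop (Suc j) v)"
    for j using assms by (auto simp: pos_word_def dest: in_set_takeD in_set_dropD)
  have "iota_stuffle [k] v w
      = (\<Sum>c\<in>?C. (\<Sum>j\<le>length v. if c = take j v @ k # drop j v then 1 else 0)
          + (\<Sum>j<length v. if c = take j v @ (k + v ! j) # drop (Suc j) v then 1 else (0::rat)))"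
    unfolding iota_stuffle_def stc_singleton by (simp add: if_distrib cong: if_cong)
  also have "\<dots> = (\<Sum>j\<le>length v. \<Sum>c\<in>?C. if c = take j v @ k # drop j v then 1 else 0)
      + (\<Sum>j<length v. \<Sum>c\<in>?C. if c = take j v @ (k + v ! j) # drop (Suc j) v then 1 else (0::rat))"
    by (simp only: sum.distrib) (rule arg_cong2[where f = "(+)"]; rule sum.swap)
  finally show "iota_stuffle [k] v w = ((\<Sum>j\<le>length v. wp (iota (take j v @ k # drop j v)))
      + (\<Sum>j<length v. wp (iota (take j v @ (k + v ! j) # drop (Suc j) v)))) w"
    by (simp add: sum_iota_preimage_delta pos sum_fun_apply)
qed

lemma iota_replicate_2: "iota (replicate i 2) = concat (replicate i [X0, X1])"
  by (simp add: iota_def)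

lemma length_concat_replicate_X0_X1: "length (concat (replicate i [X0, X1])) = 2 * i"
  by (induction i) auto

lemma concat_replicate_X0_X1_split:
  assumes "i < n"
  shows "concat (replicate n [X0, X1])
       = concat (replicate i [X0, X1]) @ X0 # X1 # concat (replicate (n - 1 - i) [X0, X1])"
proof -
  obtain m where n: "n = i + Suc m" using assms by (metis add_Suc_right less_imp_Suc_add)
  show ?thesis
    unfolding n by (simp only: replicate_add concat_append replicate_Suc concat.simps) simp
qed

definition zf_twos_insert :: "nat \<Rightarrow> nat \<Rightarrow> poly" where
  "zf_twos_insert k m = (\<Sum>j\<le>m. zf (replicate j 2 @ [k] @ replicate (m - j) 2))"

lemma zf_twos_insert_eq_sum_lessThan:
  "m \<ge> 1 \<Longrightarrow> (\<Sum>j<m. zf (replicate j 2 @ [k] @ replicate (m - 1 - j) 2)) = zf_twos_insert k (m - 1)"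
  by (cases m) (simp_all add: zf_twos_insert_def lessThan_Suc_atMost)

lemma regularized_x0x1_power_x0:
  assumes "n \<ge> 1"
  shows "zeq (wp (concat (replicate n [X0, X1]) @ [X0])) (smul (-2) (zf_twos_insert 3 (n - 1)))"
proof -
  let ?u = "concat (replicate n [X0, X1])"
  let ?Z = "\<lambda>i. zf (replicate i 2 @ [3] @ replicate (n - 1 - i) 2)"
  let ?g = "\<lambda>j. wp (take j ?u @ X0 # drop j ?u)"
  have Z: "?Z i = wp (concat (replicate i [X0, X1]) @ [X0, X0, X1] @ concat (replicate (n - 1 - i) [X0, X1]))"
    for i by (simp only: zf_def iota_append iota_replicate_2) (simp add: eval_nat_numeral)
  have "?g (2 * i) = ?Z i" "?g (2 * i + 1) = ?Z i" if "i < n" for i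
    unfolding Z concat_replicate_X0_X1_split[OF that]
    by (simp_all add: length_concat_replicate_X0_X1)
  then have "(\<Sum>j\<le>length ?u. ?g j) = wp (?u @ [X0]) + (\<Sum>i<n. ?Z i + ?Z i)"
    by (simp add: length_concat_replicate_X0_X1 lessThan_Suc_atMost[symmetric]
        sum_lessThan_double add.commute)
  also have "\<dots> = wp (?u @ [X0]) - smul (-2) (\<Sum>i<n. ?Z i)"
    by (rule ext) (simp add: smul_def sum_fun_apply sum.distrib sum_distrib_left[symmetric])
  also have "\<dots> = wp (?u @ [X0]) - smul (-2) (zf_twos_insert 3 (n - 1))"
    by (simp only: zf_twos_insert_eq_sum_lessThan[OF assms])
  finally show ?thesis
    using zeq_insertions_X0_zero[of ?u] by (simp add: zeq_def)
qed

lemma iota_stuffle_twos: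
  assumes "k \<ge> 1"
  shows "iota_stuffle [k] (replicate m 2)
       = zf_twos_insert k m + (if m = 0 then 0 else zf_twos_insert (k + 2) (m - 1))"
proof -
  have "(\<Sum>j<m. wp (iota (take j (replicate m 2) @ (k + replicate m 2 ! j) # drop (Suc j) (replicate m 2))))
      = (\<Sum>j<m. zf (replicate j 2 @ [k + 2] @ replicate (m - 1 - j) 2))"
    by (intro sum.cong) (auto simp: zf_def min_def)
  moreover have "(\<Sum>j\<le>m. wp (iota (take j (replicate m 2) @ k # drop j (replicate m 2))))
      = zf_twos_insert k m"
    unfolding zf_twos_insert_def by (intro sum.cong) (auto simp: zf_def min_def)
  ultimately show ?thesis
    using iota_stuffle_singleton[of "replicate m 2" k] assms zf_twos_insert_eq_sum_lessThan[of m]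
    by (simp add: pos_word_def)
qed

lemma zeq_shuffle_zeta_twos:
  assumes "k \<ge> 2"
  shows "zeq (sh (zf [k]) (zf (replicate m 2)))
             (zf_twos_insert k m + (if m = 0 then 0 else zf_twos_insert (k + 2) (m - 1)))"
proof -
  from assms have "k \<ge> 1" by simp
  show ?thesis
    unfolding zeq_def zf_def iota_stuffle_twos[OF \<open>k \<ge> 1\<close>, symmetric]
    using assms by (intro R.gen_st) (auto simp: pos_word_def)
qed

lemma alternating_shuffle_zeta_odd_twos:
  assumes "n \<ge> 1"
  shows "zeq (smul 2 (\<Sum>i=1..n. smul ((-1) ^ i) (sh (zf [2 * i + 1]) (zf (replicate (n - i) 2)))))
             (smul (-2) (zf_twos_insert 3 (n - 1)))"
proof -
  define F where "F i = (if i \<le> n then zf_twos_insert (2 * i + 1) (n - i) else 0)" for i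
  have "zeq (sh (zf [2 * i + 1]) (zf (replicate (n - i) 2))) (F i + F (Suc i))" if "i \<in> {1..n}" for i
  proof -
    have "F i + F (Suc i)
        = zf_twos_insert (2 * i + 1) (n - i) + (if n - i = 0 then 0 else zf_twos_insert (2 * i + 1 + 2) (n - i - 1))"
      using that unfolding F_def by auto
    with that zeq_shuffle_zeta_twos[of "2 * i + 1" "n - i"] show ?thesis by simp
  qed
  then have "zeq (\<Sum>i=1..n. smul ((-1) ^ i) (sh (zf [2 * i + 1]) (zf (replicate (n - i) 2))))
                 (\<Sum>i=1..n. (-1) ^ i * (F i + F (Suc i)))"
    unfolding smul_neg_one_power[symmetric] by (intro zeq_sum zeq_smul)
  also have "(\<Sum>i=1..n. (-1) ^ i * (F i + F (Suc i))) = (-1) ^ n * F (Suc n) - F 1"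
    by (rule sum_alternating_telescope)
  also have "\<dots> = smul (-1) (zf_twos_insert 3 (n - 1))"
    using assms by (simp add: F_def smul_def fun_eq_iff)
  finally have "zeq (smul 2 (\<Sum>i=1..n. smul ((-1) ^ i) (sh (zf [2 * i + 1]) (zf (replicate (n - i) 2)))))
      (smul 2 (smul (-1) (zf_twos_insert 3 (n - 1))))"
    by (rule zeq_smul)
  then show ?thesis by (simp add: smul_def)
qed

theorem mainTheorem11:
  fixes n :: nat
  assumes "n \<ge> 1"
  shows "zeq (wp (concat (replicate n [X0, X1]) @ [X0]))
             (smul (-2) (\<Sum>i<n. zf (replicate i 2 @ [3] @ replicate (n - 1 - i) 2)))
       \<and> zeq (smul (-2) (\<Sum>i<n. zf (replicate i 2 @ [3] @ replicate (n - 1 - i) 2)))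
             (smul 2 (\<Sum>i=1..n. smul ((-1) ^ i) (sh (zf [2 * i + 1]) (zf (replicate (n - i) 2)))))"
  unfolding zf_twos_insert_eq_sum_lessThan[OF assms]
  using regularized_x0x1_power_x0[OF assms] alternating_shuffle_zeta_odd_twos[OF assms]
  by (blast intro: zeq_sym)

end
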